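(* Let $k\ge1$ be the cache size, let $\mathcal{A}$ be a conservative or marking paging algorithm and $\mathcal{B}$ any paging algorithm. Then for any access graph $G$, \[\mathrm{Min}^G(\mathcal{B},\mathcal{A})\ge-1+\frac1k\quad\text{and}\quad \mathrm{Max}^G(\mathcal{A},\mathcal{B})\le1-\frac1k.\]
   Context: Paging: a cache holds at most $k$ pages and is initially empty. A request to a page in the cache is a hit; otherwise it is a fault, the page is brought into the cache, evicting a page first if the cache is full. $\mathcal{A}(I)$ is the number of faults of $\mathcal{A}$ on request sequence $I$. $k$-phases: a request sequence is divided recursively: phase 0 is empty, and for $i\ge1$ phase $i$ is a maximal sequence following phase $i-1$ containing at most $k$ distinct pages. An algorithm is conservative if it incurs at most $k$ faults on any consecutive subsequence containing at most $k$ distinct pages. An algorithm is marking if, within any $k$-phase, once a page has been requested in that phase it is not evicted for the rest of that phase. Access graph: a graph $G$ whose vertices are the pages; a request sequence respects $G$ if any two consecutive requests are identical or adjacent in $G$; $L(G)$ is the set of such sequences. Relative interval: $\mathrm{Min}_{\mathcal{A},\mathcal{B}}(n,G)=\min\{\mathcal{A}(I)-\mathcal{B}(I): I\in L(G),|I|=n\}$, $\mathrm{Max}_{\mathcal{A},\mathcal{B}}(n,G)$ analogously with max; $\mathrm{Min}^G(\mathcal{A},\mathcal{B})=\liminf_{n\to\infty}\mathrm{Min}_{\mathcal{A},\mathcal{B}}(n,G)/n$ and $\mathrm{Max}^G(\mathcal{A},\mathcal{B})=\limsup_{n\to\infty}\mathrm{Max}_{\mathcal{A},\mathcal{B}}(n,G)/n$.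 *)

theory Defs
  imports Complex_Main "HOL-Library.Liminf_Limsup" "HOL-Library.Extended_Real"
begin

(* A deterministic online paging algorithm with cache size k is represented by the
   function mapping each history (prefix of requests already served) to the cache
   contents after serving it. *)
definition paging_alg :: "nat \<Rightarrow> ('p list \<Rightarrow> 'p set) \<Rightarrow> bool" where
  "paging_alg k A \<longleftrightarrow> A [] = {} \<and>
     (\<forall>xs r. if r \<in> A xs then A (xs @ [r]) = A xs
             else if card (A xs) < k then A (xs @ [r]) = insert r (A xs)
             else (\<exists>q\<in>A xs. A (xs @ [r]) = insert r (A xs - {q})))"

definition is_fault :: "('p list \<Rightarrow> 'p set) \<Rightarrow> 'p list \<Rightarrow> nat \<Rightarrow> bool" where
  "is_fault A I t \<longleftrightarrow> I ! t \<notin> A (take t I)"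

definition faults :: "('p list \<Rightarrow> 'p set) \<Rightarrow> 'p list \<Rightarrow> nat" where
  "faults A I = card {t. t < length I \<and> is_fault A I t}"

definition segment :: "'p list \<Rightarrow> nat \<Rightarrow> nat \<Rightarrow> 'p list" where
  "segment I i j = drop i (take j I)"

definition conservative :: "nat \<Rightarrow> ('p list \<Rightarrow> 'p set) \<Rightarrow> bool" where
  "conservative k A \<longleftrightarrow>
     (\<forall>I i j. i \<le> j \<and> j \<le> length I \<and> card (set (segment I i j)) \<le> k \<longrightarrow>
        card {t. i \<le> t \<and> t < j \<and> is_fault A I t} \<le> k)"

definition phase_end :: "nat \<Rightarrow> 'p list \<Rightarrow> nat \<Rightarrow> nat" where
  "phase_end k I s = (GREATEST e. s \<le> e \<and> e \<le> length I \<and> card (set (segment I s e)) \<le> k)"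

(* the k-phases of I, as half-open position intervals [s,e) *)
inductive k_phase :: "nat \<Rightarrow> 'p list \<Rightarrow> nat \<Rightarrow> nat \<Rightarrow> bool" for k I where
  first: "0 < length I \<Longrightarrow> k_phase k I 0 (phase_end k I 0)"
| step: "k_phase k I s e \<Longrightarrow> e < length I \<Longrightarrow> k_phase k I e (phase_end k I e)"

definition marking :: "nat \<Rightarrow> ('p list \<Rightarrow> 'p set) \<Rightarrow> bool" where
  "marking k A \<longleftrightarrow>
     (\<forall>I s e i t. k_phase k I s e \<and> s \<le> i \<and> i \<le> t \<and> t < e \<longrightarrow>
        I ! i \<in> A (take (Suc t) I))"

definition access_graph :: "'p set \<Rightarrow> ('p \<times> 'p) set \<Rightarrow> bool" where
  "access_graph V E \<longleftrightarrow> V \<noteq> {} \<and> E \<subseteq> V \<times> V \<and> sym E"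

definition respects_graph :: "'p set \<Rightarrow> ('p \<times> 'p) set \<Rightarrow> 'p list \<Rightarrow> bool" where
  "respects_graph V E I \<longleftrightarrow> set I \<subseteq> V \<and>
     (\<forall>i. Suc i < length I \<longrightarrow> I ! i = I ! Suc i \<or> (I ! i, I ! Suc i) \<in> E)"

definition MinD :: "('p list \<Rightarrow> 'p set) \<Rightarrow> ('p list \<Rightarrow> 'p set) \<Rightarrow> nat \<Rightarrow> 'p set \<Rightarrow> ('p \<times> 'p) set \<Rightarrow> real" where
  "MinD A B n V E = Inf ((\<lambda>I. real (faults A I) - real (faults B I)) ` {I. respects_graph V E I \<and> length I = n})"

definition MaxD :: "('p list \<Rightarrow> 'p set) \<Rightarrow> ('p list \<Rightarrow> 'p set) \<Rightarrow> nat \<Rightarrow> 'p set \<Rightarrow> ('p \<times> 'p) set \<Rightarrow> real" where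
  "MaxD A B n V E = Sup ((\<lambda>I. real (faults A I) - real (faults B I)) ` {I. respects_graph V E I \<and> length I = n})"

definition MinG :: "'p set \<Rightarrow> ('p \<times> 'p) set \<Rightarrow> ('p list \<Rightarrow> 'p set) \<Rightarrow> ('p list \<Rightarrow> 'p set) \<Rightarrow> ereal" where
  "MinG V E A B = liminf (\<lambda>n. ereal (MinD A B n V E / real n))"

definition MaxG :: "'p set \<Rightarrow> ('p \<times> 'p) set \<Rightarrow> ('p list \<Rightarrow> 'p set) \<Rightarrow> ('p list \<Rightarrow> 'p set) \<Rightarrow> ereal" where
  "MaxG V E A B = limsup (\<lambda>n. ereal (MaxD A B n V E / real n))"

end

theory Submission
  imports Defs
begin

text \<open>Cut the request sequence into its \<open>k\<close>-phases. A conservative or marking algorithm faults at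
  most \<open>k\<close> times per phase. Every phase but the last has \<open>k\<close> distinct pages, hence at least \<open>k\<close>
  requests, and together with the first request of the next phase it touches \<open>k + 1\<close> distinct pages,
  so any algorithm with cache size \<open>k\<close> faults somewhere after the first request of the phase and up to
  that first request of the next one; these windows are disjoint. With \<open>J\<close> complete phases this gives
  \<open>A(I) \<le> k(J + 1)\<close>, \<open>B(I) \<ge> J\<close> and \<open>kJ \<le> n\<close>, hence \<open>A(I) - B(I) \<le> (1 - 1/k) n + k\<close> for every
  sequence, and both bounds follow after dividing by \<open>n\<close>.\<close>

lemma segment_eq_map_nth: "j \<le> length I \<Longrightarrow> segment I i j = map ((!) I) [i..<j]"
  by (simp add: segment_def list_eq_iff_nth_eq)

lemma set_segment: "j \<le> length I \<Longrightarrow> set (segment I i j) = (!) I ` {i..<j}"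
  by (simp add: segment_eq_map_nth)

lemma length_segment: "j \<le> length I \<Longrightarrow> length (segment I i j) = j - i"
  by (simp add: segment_eq_map_nth)

lemma card_set_segment_le: "j \<le> length I \<Longrightarrow> card (set (segment I i j)) \<le> j - i"
  by (metis card_length length_segment)

subsection \<open>Paging algorithms\<close>

lemma paging_alg_cache_size:
  assumes "paging_alg k A"
  shows "finite (A xs) \<and> card (A xs) \<le> k"
proof (induction xs rule: rev_induct)
  case Nil
  then show ?case using assms by (simp add: paging_alg_def)
next
  case (snoc r xs)
  have step: "if r \<in> A xs then A (xs @ [r]) = A xs
      else if card (A xs) < k then A (xs @ [r]) = insert r (A xs)
      else (\<exists>q\<in>A xs. A (xs @ [r]) = insert r (A xs - {q}))"
    using assms unfolding paging_alg_def by blast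
  show ?case
  proof (cases "r \<in> A xs")
    case True
    then show ?thesis using step snoc.IH by simp
  next
    case miss: False
    show ?thesis
    proof (cases "card (A xs) < k")
      case True
      then show ?thesis using step snoc.IH miss by (simp add: card_insert_if)
    next
      case False
      then obtain q where "q \<in> A xs" "A (xs @ [r]) = insert r (A xs - {q})"
        using step miss by auto
      moreover have "0 < card (A xs)"
        using \<open>q \<in> A xs\<close> snoc.IH card_gt_0_iff by blast
      ultimately show ?thesis using snoc.IH miss by simp
    qed
  qed
qed

lemma paging_alg_requested_in_cache:
  "paging_alg k A \<Longrightarrow> t < length I \<Longrightarrow> I ! t \<in> A (take (Suc t) I)"
  unfolding paging_alg_def by (metis insertI1 take_Suc_conv_app_nth)

lemma paging_alg_hit:
  "paging_alg k A \<Longrightarrow> \<not> is_fault A I t \<Longrightarrow> t < length I \<Longrightarrow> A (take (Suc t) I) = A (take t I)"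
  unfolding paging_alg_def is_fault_def by (metis take_Suc_conv_app_nth)

definition faults_in :: "('p list \<Rightarrow> 'p set) \<Rightarrow> 'p list \<Rightarrow> nat \<Rightarrow> nat \<Rightarrow> nat" where
  "faults_in A I i j = card {t. i \<le> t \<and> t < j \<and> is_fault A I t}"

lemma faults_eq_faults_in: "faults A I = faults_in A I 0 (length I)"
  unfolding faults_def faults_in_def by simp

lemma finite_faults_in_set: "finite {t. i \<le> t \<and> t < j \<and> is_fault A I t}"
  by (rule finite_subset[of _ "{..<j}"]) auto

lemma faults_in_split:
  assumes "i \<le> j" "j \<le> l"
  shows "faults_in A I i l = faults_in A I i j + faults_in A I j l"
proof -
  have "{t. i \<le> t \<and> t < l \<and> is_fault A I t} =
        {t. i \<le> t \<and> t < j \<and> is_fault A I t} \<union> {t. j \<le> t \<and> t < l \<and> is_fault A I t}"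
    using assms by auto
  moreover have "{t. i \<le> t \<and> t < j \<and> is_fault A I t} \<inter> {t. j \<le> t \<and> t < l \<and> is_fault A I t} = {}"
    by auto
  ultimately show ?thesis
    unfolding faults_in_def using finite_faults_in_set by (simp add: card_Un_disjoint)
qed

lemma faults_in_pos: "i \<le> t \<Longrightarrow> t < j \<Longrightarrow> is_fault A I t \<Longrightarrow> 1 \<le> faults_in A I i j"
  unfolding faults_in_def using finite_faults_in_set by (auto simp: Suc_le_eq card_gt_0_iff)

lemma fault_in_segment_of_more_than_k_pages:
  assumes B: "paging_alg k B" and ij: "i < j" "j \<le> length I"
    and pages: "k < card (set (segment I i j))"
  shows "\<exists>t. i < t \<and> t < j \<and> is_fault B I t"
proof (rule ccontr)
  assume "\<not> ?thesis"
  then have no_fault: "\<not> is_fault B I t" if "i < t" "t < j" for t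
    using that by blast
  define C where "C = B (take (Suc i) I)"
  have cache_const: "B (take t I) = C" if "Suc i \<le> t" "t \<le> j" for t
    using that
  proof (induction t rule: dec_induct)
    case (step t)
    then show ?case using paging_alg_hit[OF B no_fault] ij by simp
  qed (simp add: C_def)
  have "set (segment I i j) \<subseteq> C"
  proof
    fix p assume "p \<in> set (segment I i j)"
    then obtain t where t: "i \<le> t" "t < j" "p = I ! t"
      using set_segment[OF ij(2)] by auto
    show "p \<in> C"
    proof (cases "t = i")
      case True
      then show ?thesis using t ij paging_alg_requested_in_cache[OF B] by (simp add: C_def)
    next
      case False
      then have "I ! t \<in> B (take t I)" using no_fault t unfolding is_fault_def by simp
      then show ?thesis using cache_const False t by simp
    qed
  qed
  then have "card (set (segment I i j)) \<le> card C"
    using paging_alg_cache_size[OF B] unfolding C_def by (intro card_mono) auto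
  also have "card C \<le> k"
    using paging_alg_cache_size[OF B] unfolding C_def by blast
  finally show False using pages by simp
qed

lemma marking_faults_in_le_card:
  assumes M: "marking k A" and phase: "k_phase k I s e" and e: "e \<le> length I"
  shows "faults_in A I s e \<le> card (set (segment I s e))"
proof -
  let ?F = "{t. s \<le> t \<and> t < e \<and> is_fault A I t}"
  have "I ! a \<noteq> I ! b" if "a \<in> ?F" "b \<in> ?F" "a < b" for a b
  proof
    assume "I ! a = I ! b"
    moreover have "s \<le> a" "a \<le> b - 1" "b - 1 < e"
      using that by auto
    then have "I ! a \<in> A (take (Suc (b - 1)) I)"
      using M phase unfolding marking_def by blast
    ultimately show False using that unfolding is_fault_def by simp
  qed
  then have "inj_on ((!) I) ?F" by (rule linorder_inj_onI')
  then have "faults_in A I s e = card ((!) I ` ?F)"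
    unfolding faults_in_def by (simp add: card_image)
  also have "\<dots> \<le> card (set (segment I s e))"
    using set_segment[OF e] by (intro card_mono) auto
  finally show ?thesis .
qed

subsection \<open>Phases\<close>

lemma phase_end_greatest:
  assumes "s \<le> length I"
  shows "s \<le> phase_end k I s \<and> phase_end k I s \<le> length I
           \<and> card (set (segment I s (phase_end k I s))) \<le> k"
    and "\<And>e. s \<le> e \<Longrightarrow> e \<le> length I \<Longrightarrow> card (set (segment I s e)) \<le> k \<Longrightarrow> e \<le> phase_end k I s"
proof -
  let ?P = "\<lambda>e. s \<le> e \<and> e \<le> length I \<and> card (set (segment I s e)) \<le> k"
  have "?P s" using assms by (simp add: segment_def)
  moreover have bound: "\<And>e. ?P e \<Longrightarrow> e \<le> length I" by simp
  ultimately show "?P (phase_end k I s)"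
    unfolding phase_end_def by (rule GreatestI_nat)
  show "e \<le> phase_end k I s" if "s \<le> e" "e \<le> length I" "card (set (segment I s e)) \<le> k" for e
    unfolding phase_end_def using that bound by (intro Greatest_le_nat) auto
qed

lemma phase_end_ge: "s \<le> length I \<Longrightarrow> s \<le> phase_end k I s"
  using phase_end_greatest(1) by blast

lemma phase_end_le_length: "s \<le> length I \<Longrightarrow> phase_end k I s \<le> length I"
  using phase_end_greatest(1) by blast

lemma card_set_segment_phase_end_le: "s \<le> length I \<Longrightarrow> card (set (segment I s (phase_end k I s))) \<le> k"
  using phase_end_greatest(1) by blast

lemma phase_end_length: "phase_end k I (length I) = length I"
  using phase_end_ge phase_end_le_length by (metis le_antisym order_refl)

lemma phase_end_maximal:
  assumes "s \<le> length I" "phase_end k I s < length I"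
  shows "k < card (set (segment I s (Suc (phase_end k I s))))"
proof (rule ccontr)
  assume "\<not> ?thesis"
  then have "Suc (phase_end k I s) \<le> phase_end k I s"
    using assms phase_end_ge[OF assms(1), of k] by (intro phase_end_greatest(2)) auto
  then show False by simp
qed

lemma k_phaseD: "k_phase k I s e \<Longrightarrow> s < length I \<and> e = phase_end k I s"
  by (induction rule: k_phase.induct) auto

lemma faults_in_k_phase_le:
  assumes A: "conservative k A \<or> marking k A" and phase: "k_phase k I s e"
  shows "faults_in A I s e \<le> k"
proof -
  have s: "s < length I" and e: "e = phase_end k I s"
    using k_phaseD[OF phase] by auto
  then have bounds: "s \<le> e" "e \<le> length I" and pages: "card (set (segment I s e)) \<le> k"
    using phase_end_ge phase_end_le_length card_set_segment_phase_end_le less_imp_le by blast+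
  show ?thesis
  proof (cases "conservative k A")
    case True
    then show ?thesis
      using bounds pages unfolding conservative_def faults_in_def by blast
  next
    case False
    then have "marking k A" using A by blast
    then show ?thesis
      using order_trans[OF marking_faults_in_le_card[OF _ phase bounds(2)] pages] by blast
  qed
qed

text \<open>\<open>phase_start k I j\<close> is where the \<open>(j+1)\<close>-st \<open>k\<close>-phase begins; once \<open>I\<close> is exhausted it stays at
  \<open>length I\<close>, because \<open>phase_end k I (length I) = length I\<close>.\<close>

definition phase_start :: "nat \<Rightarrow> 'p list \<Rightarrow> nat \<Rightarrow> nat" where
  "phase_start k I j = (phase_end k I ^^ j) 0"

lemma phase_start_0 [simp]: "phase_start k I 0 = 0"
  by (simp add: phase_start_def)

lemma phase_start_Suc [simp]: "phase_start k I (Suc j) = phase_end k I (phase_start k I j)"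
  by (simp add: phase_start_def)

lemma phase_start_le_length: "phase_start k I j \<le> length I"
  by (induction j) (simp_all add: phase_end_le_length)

lemma phase_start_le_Suc: "phase_start k I j \<le> phase_start k I (Suc j)"
  by (simp add: phase_end_ge phase_start_le_length)

lemma k_phase_phase_start:
  "phase_start k I j < length I \<Longrightarrow> k_phase k I (phase_start k I j) (phase_start k I (Suc j))"
proof (induction j)
  case 0
  then show ?case using k_phase.first by fastforce
next
  case (Suc j)
  then have "k_phase k I (phase_start k I j) (phase_start k I (Suc j))"
    using phase_start_le_Suc le_less_trans by blast
  then show ?case using k_phase.step Suc.prems by fastforce
qed

lemma phase_start_lower_bound: "phase_start k I j < length I \<Longrightarrow> k * j \<le> phase_start k I j"
proof (induction j)
  case (Suc j)
  let ?s = "phase_start k I j" and ?e = "phase_start k I (Suc j)"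
  have s: "?s < length I" using Suc.prems phase_start_le_Suc le_less_trans by blast
  have "k < card (set (segment I ?s (Suc ?e)))"
    using phase_end_maximal[OF less_imp_le[OF s]] Suc.prems by simp
  also have "\<dots> \<le> Suc ?e - ?s"
    using Suc.prems by (intro card_set_segment_le) simp
  finally show ?case using Suc.IH s by simp
qed simp

lemma faults_in_phase_start_le:
  assumes A: "conservative k A \<or> marking k A"
  shows "faults_in A I 0 (phase_start k I j) \<le> k * j"
proof (induction j)
  case (Suc j)
  show ?case
  proof (cases "phase_start k I j < length I")
    case True
    have "faults_in A I 0 (phase_start k I (Suc j))
        = faults_in A I 0 (phase_start k I j) + faults_in A I (phase_start k I j) (phase_start k I (Suc j))"
      using phase_start_le_Suc by (intro faults_in_split) auto
    also have "\<dots> \<le> k * j + k"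
      using Suc.IH faults_in_k_phase_le[OF A k_phase_phase_start[OF True]] by simp
    finally show ?thesis by simp
  next
    case False
    then have "phase_start k I (Suc j) = phase_start k I j"
      using phase_start_le_length[of k I j] phase_end_length by (simp add: le_antisym)
    then show ?thesis using Suc.IH by simp
  qed
qed (simp add: faults_in_def)

lemma faults_in_phase_start_ge:
  assumes B: "paging_alg k B"
  shows "phase_start k I j < length I \<Longrightarrow> j \<le> faults_in B I 0 (Suc (phase_start k I j))"
proof (induction j)
  case (Suc j)
  let ?s = "phase_start k I j" and ?e = "phase_start k I (Suc j)"
  have s: "?s < length I" using Suc.prems phase_start_le_Suc le_less_trans by blast
  have "k < card (set (segment I ?s (Suc ?e)))"
    using phase_end_maximal[OF less_imp_le[OF s]] Suc.prems by simp
  then obtain t where "?s < t" "t < Suc ?e" "is_fault B I t"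
    using fault_in_segment_of_more_than_k_pages[OF B, of ?s "Suc ?e" I]
      Suc.prems phase_start_le_Suc[of k I j]
    by (auto simp: Suc_le_eq)
  then have "1 \<le> faults_in B I (Suc ?s) (Suc ?e)"
    by (intro faults_in_pos) auto
  moreover have "faults_in B I 0 (Suc ?e) = faults_in B I 0 (Suc ?s) + faults_in B I (Suc ?s) (Suc ?e)"
    using phase_start_le_Suc by (intro faults_in_split) auto
  ultimately show ?case using Suc.IH s by simp
qed simp

lemma last_phase_start:
  assumes "1 \<le> k" "0 < length I"
  obtains J where "phase_start k I J < length I" "phase_start k I (Suc J) = length I"
proof -
  have "length I \<le> phase_start k I (length I)"
  proof (rule ccontr)
    assume "\<not> ?thesis"
    then have "k * length I < length I"
      using phase_start_lower_bound by (metis not_le le_less_trans)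
    then show False using assms(1) by simp
  qed
  then obtain J where "\<not> length I \<le> phase_start k I J" "length I \<le> phase_start k I (Suc J)"
    using ex_least_nat_less[of "\<lambda>j. length I \<le> phase_start k I j"] assms(2) by auto
  moreover have "phase_start k I (Suc J) = length I"
    using calculation(2) phase_start_le_length le_antisym by blast
  ultimately show ?thesis using that not_le by blast
qed

lemma faults_phase_count_bounds:
  assumes k: "1 \<le> k" and A: "conservative k A \<or> marking k A" and B: "paging_alg k B"
  obtains J where "faults A I \<le> k * Suc J" "J \<le> faults B I" "k * J \<le> length I"
proof (cases "length I = 0")
  case True
  then show ?thesis using that[of 0] by (simp add: faults_def)
next
  case False
  then have "0 < length I" by simp
  then obtain J where J: "phase_start k I J < length I" "phase_start k I (Suc J) = length I"
    by (rule last_phase_start[OF k])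
  have "faults A I = faults_in A I 0 (phase_start k I (Suc J))"
    unfolding faults_eq_faults_in J(2) ..
  then have "faults A I \<le> k * Suc J"
    using faults_in_phase_start_le[OF A] by presburger
  moreover have "faults B I = faults_in B I 0 (Suc (phase_start k I J))
                               + faults_in B I (Suc (phase_start k I J)) (length I)"
    unfolding faults_eq_faults_in using J(1) by (intro faults_in_split) auto
  then have "J \<le> faults B I"
    using faults_in_phase_start_ge[OF B J(1)] by linarith
  moreover have "k * J \<le> length I"
    using phase_start_lower_bound[OF J(1)] J(1) by simp
  ultimately show ?thesis by (rule that)
qed

lemma faults_diff_le:
  assumes k: "1 \<le> k" and A: "conservative k A \<or> marking k A" and B: "paging_alg k B"
  shows "real (faults A I) - real (faults B I) \<le> (1 - 1 / real k) * real (length I) + real k"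
proof -
  obtain J where fA: "faults A I \<le> k * Suc J" and fB: "J \<le> faults B I" and len: "k * J \<le> length I"
    using faults_phase_count_bounds[OF k A B] .
  have "real (faults A I) \<le> real k * (real J + 1)" "real J \<le> real (faults B I)"
    using of_nat_mono[OF fA] of_nat_mono[OF fB] by (simp_all add: algebra_simps)
  then have "real (faults A I) - real (faults B I) \<le> real k * (real J + 1) - real J"
    by linarith
  also have "\<dots> = (1 - 1 / real k) * (real k * real J) + real k"
    using k by (simp add: field_simps)
  also have "\<dots> \<le> (1 - 1 / real k) * real (length I) + real k"
    using k of_nat_mono[OF len] by (intro add_right_mono mult_left_mono) simp_all
  finally show ?thesis .
qed

lemma respects_graph_replicate: "v \<in> V \<Longrightarrow> respects_graph V E (replicate n v)"
  by (auto simp: respects_graph_def)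

lemma MaxD_le:
  assumes "v \<in> V"
    and "\<And>I. respects_graph V E I \<Longrightarrow> length I = n \<Longrightarrow> real (faults A I) - real (faults B I) \<le> b"
  shows "MaxD A B n V E \<le> b"
  unfolding MaxD_def
proof (rule cSup_least)
  show "(\<lambda>I. real (faults A I) - real (faults B I)) ` {I. respects_graph V E I \<and> length I = n} \<noteq> {}"
    using respects_graph_replicate[OF assms(1)] by fastforce
qed (use assms(2) in auto)

lemma MinD_ge:
  assumes "v \<in> V"
    and "\<And>I. respects_graph V E I \<Longrightarrow> length I = n \<Longrightarrow> b \<le> real (faults A I) - real (faults B I)"
  shows "b \<le> MinD A B n V E"
  unfolding MinD_def
proof (rule cInf_greatest)
  show "(\<lambda>I. real (faults A I) - real (faults B I)) ` {I. respects_graph V E I \<and> length I = n} \<noteq> {}"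
    using respects_graph_replicate[OF assms(1)] by fastforce
qed (use assms(2) in auto)

lemma limsup_div_le:
  fixes f :: "nat \<Rightarrow> real"
  assumes "\<And>n. f n \<le> c * real n + d"
  shows "limsup (\<lambda>n. ereal (f n / real n)) \<le> ereal c"
proof -
  have le: "f n / real n \<le> c + d / real n" if "0 < n" for n
  proof -
    have "f n / real n \<le> (c * real n + d) / real n"
      using assms by (intro divide_right_mono) simp_all
    also have "\<dots> = c + d / real n"
      using that by (simp add: field_simps)
    finally show ?thesis .
  qed
  have "eventually (\<lambda>n. ereal (f n / real n) \<le> ereal (c + d / real n)) sequentially"
    by (rule eventually_mono[OF eventually_gt_at_top[of 0]]) (simp add: le)
  then have "limsup (\<lambda>n. ereal (f n / real n)) \<le> limsup (\<lambda>n. ereal (c + d / real n))"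
    by (rule Limsup_mono)
  also have "\<dots> = ereal c"
  proof (rule lim_imp_Limsup)
    show "(\<lambda>n. ereal (c + d / real n)) \<longlonglongrightarrow> ereal c"
      using tendsto_ereal[OF tendsto_add[OF tendsto_const lim_const_over_n[of d]]] by simp
  qed simp
  finally show ?thesis .
qed

lemma liminf_div_ge:
  fixes f :: "nat \<Rightarrow> real"
  assumes "\<And>n. c * real n - d \<le> f n"
  shows "ereal c \<le> liminf (\<lambda>n. ereal (f n / real n))"
proof -
  have "limsup (\<lambda>n. ereal (- f n / real n)) \<le> ereal (- c)"
  proof (rule limsup_div_le[where d = d])
    show "- f n \<le> - c * real n + d" for n
      using assms[of n] by linarith
  qed
  moreover have "limsup (\<lambda>n. ereal (- f n / real n)) = - liminf (\<lambda>n. ereal (f n / real n))"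
    using ereal_Limsup_uminus[of sequentially "\<lambda>n. ereal (f n / real n)"] by simp
  ultimately show ?thesis
    by (simp add: ereal_uminus_le_reorder)
qed

theorem proposition1:
  fixes k :: nat and A B :: "'p list \<Rightarrow> 'p set"
    and V :: "'p set" and E :: "('p \<times> 'p) set"
  assumes "k \<ge> 1"
    and "paging_alg k A" and "paging_alg k B"
    and "conservative k A \<or> marking k A"
    and "access_graph V E"
  shows "MinG V E B A \<ge> ereal (-1 + 1 / real k) \<and> MaxG V E A B \<le> ereal (1 - 1 / real k)"
proof -
  obtain v where v: "v \<in> V"
    using assms(5) unfolding access_graph_def by blast
  define c where "c = 1 - 1 / real k"
  have diff: "real (faults A I) - real (faults B I) \<le> c * real (length I) + real k" for I
    unfolding c_def by (rule faults_diff_le[OF assms(1,4,3)])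
  have "MaxD A B n V E \<le> c * real n + real k" for n
    by (rule MaxD_le[OF v]) (metis diff)
  then have "MaxG V E A B \<le> ereal c"
    unfolding MaxG_def by (rule limsup_div_le)
  moreover have "(- c) * real n - real k \<le> MinD B A n V E" for n
  proof (rule MinD_ge[OF v])
    show "- c * real n - real k \<le> real (faults B I) - real (faults A I)" if "length I = n" for I
      using diff[of I, unfolded that] by linarith
  qed
  then have "ereal (- c) \<le> MinG V E B A"
    unfolding MinG_def by (rule liminf_div_ge)
  ultimately show ?thesis
    unfolding c_def by simp
qed

end
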